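(* Let $T>0$, $N\ge2$, $h=T/N$, $t_n=nh$, and let $\beta,\gamma\in\mathbb R$ satisfy either (C1) $\beta<0$, $\gamma<0$ and $-1<\beta+\gamma<0$, or (C2) $\beta\ge0$ and $\gamma\in(-1,0)$. Then there is a constant $C$ (independent of $N$) such that for all $1<j\le N$, $\tau\in(t_{j-1},t_j]$ and $\eta\in(0,t_{j-1}]$, $$\int_0^\eta(\eta-r)^\beta\big((t_{j-1}-r)^\gamma-(\tau-r)^\gamma\big)\,\mathrm dr\le Ch^{(\beta+\gamma+1)\wedge(\gamma+1)}.$$
   Context: $a\wedge b=\min\{a,b\}$. *)

theory Defs
  imports "HOL-Analysis.Analysis"
begin

end

theory Submission
  imports Defs
begin

text \<open>Write \<open>a = t\<^bsub>j-1\<^esub>\<close> and \<open>d = \<tau> - a \<in> (0, h]\<close>. Since \<open>x \<mapsto> x\<^sup>\<gamma> - (x + d)\<^sup>\<gamma>\<close>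
  decreases for \<open>\<gamma> < 0\<close> and \<open>\<eta> - r \<le> a - r\<close>, the integrand is dominated by
  \<open>K ((\<eta> - r)\<^sup>q - (\<eta> - r + d)\<^sup>q)\<close>, with \<open>q = \<beta> + \<gamma>, K = 1\<close> under (C1) (using also
  \<open>(s + d)\<^sup>\<beta> \<le> s\<^sup>\<beta>\<close>) and \<open>q = \<gamma>, K = T\<^sup>\<beta>\<close> under (C2). In both cases \<open>q + 1\<close> is the exponent
  of the claim, and the dominating function integrates over \<open>[0, \<eta>]\<close> to
  \<open>K (d\<^bsup>q+1\<^esup> + \<eta>\<^bsup>q+1\<^esup> - (\<eta> + d)\<^bsup>q+1\<^esup>) / (q + 1) \<le> K d\<^bsup>q+1\<^esup> / (q + 1) \<le> K h\<^bsup>q+1\<^esup> / (q + 1)\<close>.\<close>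

definition powr_gap :: "real \<Rightarrow> real \<Rightarrow> real \<Rightarrow> real" where
  "powr_gap q d x = x powr q - (x + d) powr q"

lemma powr_gap_nonneg:
  assumes "q \<le> 0" "0 \<le> d" "0 < x"
  shows "0 \<le> powr_gap q d x"
  using powr_mono2'[of q x "x + d"] assms by (simp add: powr_gap_def)

lemma powr_gap_antimono:
  assumes "q < 0" "0 \<le> d" "0 < s" "s \<le> u"
  shows "powr_gap q d u \<le> powr_gap q d s"
proof -
  have "powr_gap q d s \<ge> powr_gap q d u"
  proof (rule DERIV_nonpos_imp_nonincreasing[OF assms(4)])
    fix x assume "s \<le> x" "x \<le> u"
    hence x: "0 < x" using assms by auto
    have "(powr_gap q d has_real_derivative q * (x powr (q - 1) - (x + d) powr (q - 1))) (at x)"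
      unfolding powr_gap_def [abs_def] using x assms
      by (auto intro!: derivative_eq_intros simp: algebra_simps)
    moreover have "q * (x powr (q - 1) - (x + d) powr (q - 1)) \<le> 0"
      using powr_mono2'[of "q - 1" x "x + d"] x assms by (intro mult_nonpos_nonneg) auto
    ultimately show "\<exists>y. (powr_gap q d has_real_derivative y) (at x) \<and> y \<le> 0"
      by blast
  qed
  thus ?thesis by simp
qed

lemma has_integral_powr_gap:
  assumes "-1 < q" "0 < e" "0 \<le> d"
  shows "((\<lambda>r. powr_gap q d (e - r)) has_integral
          (d powr (q + 1) + e powr (q + 1) - (e + d) powr (q + 1)) / (q + 1)) {0..e}"
proof -
  define F where "F r = ((e + d - r) powr (q + 1) - (e - r) powr (q + 1)) / (q + 1)" for r
  have "((\<lambda>r. powr_gap q d (e - r)) has_integral (F e - F 0)) {0..e}"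
  proof (rule fundamental_theorem_of_calculus_interior)
    show "continuous_on {0..e} F"
      unfolding F_def using assms by (intro continuous_intros continuous_on_powr') auto
    fix x assume "x \<in> {0<..<e}"
    hence "0 < e - x" "0 < e + d - x" using assms by auto
    hence "(F has_real_derivative
             ((q + 1) * (e - x) powr q - (q + 1) * (e + d - x) powr q) / (q + 1)) (at x)"
      unfolding F_def [abs_def] using assms by (auto intro!: derivative_eq_intros)
    moreover have "((q + 1) * (e - x) powr q - (q + 1) * (e + d - x) powr q) / (q + 1)
        = powr_gap q d (e - x)"
      using assms by (simp add: powr_gap_def field_simps)
    ultimately show "(F has_vector_derivative powr_gap q d (e - x)) (at x)"
      by (simp add: has_real_derivative_iff_has_vector_derivative)
  qed (use assms in simp)
  moreover have "F e - F 0 = (d powr (q + 1) + e powr (q + 1) - (e + d) powr (q + 1)) / (q + 1)"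
    unfolding F_def using assms by (simp add: diff_divide_distrib[symmetric] add.commute)
  ultimately show ?thesis by simp
qed

lemma integral_le_powr_gap_bound:
  fixes f :: "real \<Rightarrow> real"
  assumes "-1 < q" "0 < e" "0 \<le> d" "0 \<le> K"
    and f_le: "\<And>r. 0 \<le> r \<Longrightarrow> r < e \<Longrightarrow> f r \<le> K * powr_gap q d (e - r)"
  shows "integral {0..e} f \<le> K * d powr (q + 1) / (q + 1)"
proof (cases "f integrable_on {0..e}")
  case True
  define I where "I = K * ((d powr (q + 1) + e powr (q + 1) - (e + d) powr (q + 1)) / (q + 1))"
  have "((\<lambda>r. K * powr_gap q d (e - r)) has_integral I) {0..e}"
    unfolding I_def using assms by (intro has_integral_mult_right has_integral_powr_gap)
  \<comment> \<open>the pointwise bound is not assumed at \<open>r = e\<close>\<close>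
  hence "((\<lambda>r. if r = e then f e else K * powr_gap q d (e - r)) has_integral I) {0..e}"
    by (rule has_integral_spike[OF negligible_sing, rotated]) auto
  hence "integral {0..e} f \<le> I"
    using True f_le by (intro has_integral_le[OF integrable_integral]) auto
  also have "I \<le> K * (d powr (q + 1) / (q + 1))"
    unfolding I_def using assms powr_mono2[of "q + 1" e "e + d"]
    by (intro mult_left_mono divide_right_mono) auto
  finally show ?thesis by simp
next
  case False
  thus ?thesis using assms by (simp add: not_integrable_integral)
qed

lemma powr_mult_gap_le_neg:
  assumes "b < 0" "g < 0" "0 \<le> d" "0 < s" "s \<le> u"
  shows "s powr b * powr_gap g d u \<le> powr_gap (b + g) d s"
proof -
  have "s powr b * powr_gap g d u \<le> s powr b * powr_gap g d s"
    using assms by (intro mult_left_mono powr_gap_antimono) auto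
  also have "\<dots> = s powr (b + g) - s powr b * (s + d) powr g"
    by (simp add: powr_gap_def powr_add algebra_simps)
  also have "\<dots> \<le> s powr (b + g) - (s + d) powr b * (s + d) powr g"
    using assms powr_mono2'[of b s "s + d"] by (intro diff_left_mono mult_right_mono) auto
  also have "\<dots> = powr_gap (b + g) d s"
    by (simp add: powr_gap_def powr_add)
  finally show ?thesis .
qed

lemma powr_mult_gap_le_nonneg:
  assumes "0 \<le> b" "g < 0" "0 \<le> d" "0 < s" "s \<le> u" "s \<le> T"
  shows "s powr b * powr_gap g d u \<le> T powr b * powr_gap g d s"
proof -
  have "s powr b * powr_gap g d u \<le> T powr b * powr_gap g d u"
    using assms powr_gap_nonneg[of g d u] by (intro mult_right_mono powr_mono2) auto
  also have "\<dots> \<le> T powr b * powr_gap g d s"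
    using assms by (intro mult_left_mono powr_gap_antimono) auto
  finally show ?thesis .
qed

lemma powr_mult_gap_dominated:
  assumes "(\<beta> < 0 \<and> \<gamma> < 0 \<and> -1 < \<beta> + \<gamma> \<and> \<beta> + \<gamma> < 0) \<or> (\<beta> \<ge> 0 \<and> -1 < \<gamma> \<and> \<gamma> < 0)"
  obtains q K where "-1 < q" "0 \<le> K" "min (\<beta> + \<gamma> + 1) (\<gamma> + 1) = q + 1"
    and "\<And>s u d. 0 \<le> d \<Longrightarrow> 0 < s \<Longrightarrow> s \<le> u \<Longrightarrow> s \<le> T \<Longrightarrow>
           s powr \<beta> * powr_gap \<gamma> d u \<le> K * powr_gap q d s"
  using assms
proof (elim disjE conjE)
  assume "\<beta> < 0" "\<gamma> < 0" "-1 < \<beta> + \<gamma>"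
  thus thesis
    using that[of "\<beta> + \<gamma>" 1] powr_mult_gap_le_neg[of \<beta> \<gamma>] by simp
next
  assume "0 \<le> \<beta>" "-1 < \<gamma>" "\<gamma> < 0"
  thus thesis
    using that[of \<gamma> "T powr \<beta>"] powr_mult_gap_le_nonneg[of \<beta> \<gamma> _ _ _ T] by simp
qed

lemma integral_powr_mult_gap_bound:
  assumes "(\<beta> < 0 \<and> \<gamma> < 0 \<and> -1 < \<beta> + \<gamma> \<and> \<beta> + \<gamma> < 0) \<or> (\<beta> \<ge> 0 \<and> -1 < \<gamma> \<and> \<gamma> < 0)"
  obtains C where "0 \<le> C"
    and "\<And>\<eta> a d. 0 < \<eta> \<Longrightarrow> \<eta> \<le> a \<Longrightarrow> a \<le> T \<Longrightarrow> 0 \<le> d \<Longrightarrow>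
           integral {0..\<eta>} (\<lambda>r. (\<eta> - r) powr \<beta> * powr_gap \<gamma> d (a - r))
             \<le> C * d powr (min (\<beta> + \<gamma> + 1) (\<gamma> + 1))"
proof -
  obtain q K where q: "-1 < q" and K: "0 \<le> K" and exponent: "min (\<beta> + \<gamma> + 1) (\<gamma> + 1) = q + 1"
    and dominated: "\<And>s u d. 0 \<le> d \<Longrightarrow> 0 < s \<Longrightarrow> s \<le> u \<Longrightarrow> s \<le> T \<Longrightarrow>
           s powr \<beta> * powr_gap \<gamma> d u \<le> K * powr_gap q d s"
    using powr_mult_gap_dominated[OF assms] by blast
  show thesis
  proof (rule that[of "K / (q + 1)"])
    fix \<eta> a d :: real assume "0 < \<eta>" "\<eta> \<le> a" "a \<le> T" "0 \<le> d"
    hence "integral {0..\<eta>} (\<lambda>r. (\<eta> - r) powr \<beta> * powr_gap \<gamma> d (a - r)) \<le> K * d powr (q + 1) / (q + 1)"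
      using q K by (intro integral_le_powr_gap_bound dominated) auto
    thus "integral {0..\<eta>} (\<lambda>r. (\<eta> - r) powr \<beta> * powr_gap \<gamma> d (a - r))
            \<le> K / (q + 1) * d powr (min (\<beta> + \<gamma> + 1) (\<gamma> + 1))"
      by (simp add: exponent)
  qed (use q K in simp)
qed

theorem lemma3p5:
  fixes T \<beta> \<gamma> :: real
  assumes "T > 0"
    and "(\<beta> < 0 \<and> \<gamma> < 0 \<and> -1 < \<beta> + \<gamma> \<and> \<beta> + \<gamma> < 0) \<or> (\<beta> \<ge> 0 \<and> -1 < \<gamma> \<and> \<gamma> < 0)"
  shows "\<exists>C. \<forall>N::nat. N \<ge> 2 \<longrightarrow>
           (\<forall>j::nat. 1 < j \<and> j \<le> N \<longrightarrow>
             (\<forall>\<tau>::real. (real j - 1) * (T / real N) < \<tau> \<and> \<tau> \<le> real j * (T / real N) \<longrightarrow>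
               (\<forall>\<eta>::real. 0 < \<eta> \<and> \<eta> \<le> (real j - 1) * (T / real N) \<longrightarrow>
                  integral {0..\<eta>} (\<lambda>r. (\<eta> - r) powr \<beta> *
                      (((real j - 1) * (T / real N) - r) powr \<gamma> - (\<tau> - r) powr \<gamma>))
                  \<le> C * (T / real N) powr (min (\<beta> + \<gamma> + 1) (\<gamma> + 1)))))"
proof -
  obtain C where C: "0 \<le> C" and bound: "\<And>\<eta> a d. 0 < \<eta> \<Longrightarrow> \<eta> \<le> a \<Longrightarrow> a \<le> T \<Longrightarrow> 0 \<le> d \<Longrightarrow>
      integral {0..\<eta>} (\<lambda>r. (\<eta> - r) powr \<beta> * powr_gap \<gamma> d (a - r))
        \<le> C * d powr (min (\<beta> + \<gamma> + 1) (\<gamma> + 1))"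
    using integral_powr_mult_gap_bound[OF assms(2)] by blast
  have exponent_pos: "0 < min (\<beta> + \<gamma> + 1) (\<gamma> + 1)" using assms(2) by auto
  show ?thesis
  proof (intro exI[of _ C] allI impI, elim conjE)
    fix N j \<tau> \<eta>
    assume "2 \<le> N" "1 < j" "j \<le> N"
      and grid: "(real j - 1) * (T / real N) < \<tau>" "\<tau> \<le> real j * (T / real N)"
        "0 < \<eta>" "\<eta> \<le> (real j - 1) * (T / real N)"
    define h where "h = T / real N"
    define a where "a = (real j - 1) * h"
    have "a + h = real j * h"
      by (simp add: a_def algebra_simps)
    hence "a < \<tau>" "\<tau> \<le> a + h" "\<eta> \<le> a"
      using grid[folded h_def, folded a_def] by simp_all
    have "a \<le> real N * h"
      unfolding a_def using \<open>j \<le> N\<close> \<open>T > 0\<close> by (intro mult_right_mono) (auto simp: h_def)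
    also have "real N * h = T"
      using \<open>2 \<le> N\<close> by (simp add: h_def)
    finally have "a \<le> T" .
    have "integral {0..\<eta>} (\<lambda>r. (\<eta> - r) powr \<beta> * powr_gap \<gamma> (\<tau> - a) (a - r))
            \<le> C * (\<tau> - a) powr (min (\<beta> + \<gamma> + 1) (\<gamma> + 1))"
      using \<open>a < \<tau>\<close> \<open>\<eta> \<le> a\<close> \<open>a \<le> T\<close> grid(3) by (intro bound) auto
    also have "\<dots> \<le> C * h powr (min (\<beta> + \<gamma> + 1) (\<gamma> + 1))"
      using C \<open>a < \<tau>\<close> \<open>\<tau> \<le> a + h\<close> exponent_pos by (intro mult_left_mono powr_mono2) auto
    finally show "integral {0..\<eta>} (\<lambda>r. (\<eta> - r) powr \<beta> *
              (((real j - 1) * (T / real N) - r) powr \<gamma> - (\<tau> - r) powr \<gamma>))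
            \<le> C * (T / real N) powr (min (\<beta> + \<gamma> + 1) (\<gamma> + 1))"
      by (simp add: powr_gap_def h_def a_def)
  qed
qed

end
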